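(* Let $m\ge 0$ be an integer and let $\rho_{\mathrm{ord}}:\mathbf U\to\mathrm{End}_R(V^{\otimes m})$ be the representation of $\mathbf U$ on $V^{\otimes m}$. Then $\rho_{\mathrm{ord}}(\mathbf U)=\rho_{\mathrm{ord}}(\mathbf U')$.
   Context: $R$ is a commutative ring with $1$, $q\in R$ invertible, $n\ge1$. Let $U_q(\mathfrak{gl}_n)$ be the $\mathbb{Q}(q)$-algebra ($q$ an indeterminate) generated by $e_i,f_i$ ($1\le i\le n-1$) and $q^h$ ($h\in P^\vee=\bigoplus_{j=1}^n\mathbb Z h_j$) with the usual relations: $q^0=1$, $q^hq^{h'}=q^{h+h'}$, $q^he_iq^{-h}=q^{\alpha_i(h)}e_i$, $q^hf_iq^{-h}=q^{-\alpha_i(h)}f_i$, $e_if_j-f_je_i=\delta_{ij}\frac{K_i-K_i^{-1}}{q-q^{-1}}$ with $K_i=q^{h_i-h_{i+1}}$, and the quantum Serre relations; here $\varepsilon_j(h_k)=\delta_{jk}$, $\alpha_i=\varepsilon_i-\varepsilon_{i+1}$. Comultiplication: $\Delta(q^h)=q^h\otimes q^h$, $\Delta(e_i)=e_i\otimes K_i^{-1}+1\otimes e_i$, $\Delta(f_i)=f_i\otimes 1+K_i\otimes f_i$. With $[l]_q=\sum_{i=0}^{l-1}q^{2i-l+1}$, $e_i^{(l)}=e_i^l/[l]_q!$, $f_i^{(l)}=f_i^l/[l]_q!$, let $\mathbf U_{\mathbb Z}$ (resp. $\mathbf U'_{\mathbb Z}$) be the $\mathbb Z[q,q^{-1}]$-subalgebra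 generated by all $q^h$ (resp. all $K_i$) and all $e_i^{(l)},f_i^{(l)}$, and $\mathbf U=R\otimes\mathbf U_{\mathbb Z}$, $\mathbf U'=R\otimes\mathbf U'_{\mathbb Z}\subseteq\mathbf U$ (specializing $q\mapsto q$). $V=R^n$ with basis $v_1,\dots,v_n$ is the $\mathbf U$-module with $q^hv_j=q^{\varepsilon_j(h)}v_j$, $e_iv_{i+1}=v_i$, $e_iv_j=0$ ($j\ne i+1$), $f_iv_i=v_{i+1}$, $f_iv_j=0$ ($j\ne i$) (the $R$-form of the vector representation); $\mathbf U$ acts on $V^{\otimes m}$ via the comultiplication. *)

theory Defs
  imports Main
begin

text \<open>Basis of V^{tensor m}: words w = [j_1,...,j_m] with 1 <= j_k <= n,
  standing for v_{j_1} (x) ... (x) v_{j_m}.  Tensor position k is the list index k (0-based).\<close>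
definition words :: "nat \<Rightarrow> nat \<Rightarrow> nat list set" where
  "words n m = {w. length w = m \<and> set w \<subseteq> {1..n}}"

text \<open>R-linear endomorphisms of V^{tensor m}, as matrices: A u w is the coefficient of
  basis vector u in A(basis vector w).  Entries outside words n m are irrelevant (kept 0).\<close>
type_synonym 'a mat = "nat list \<Rightarrow> nat list \<Rightarrow> 'a"

definition mat_mult :: "nat \<Rightarrow> nat \<Rightarrow> 'a::comm_ring_1 mat \<Rightarrow> 'a mat \<Rightarrow> 'a mat" where
  "mat_mult n m A B = (\<lambda>u w. \<Sum>v\<in>words n m. A u v * B v w)"

definition mat_one :: "nat \<Rightarrow> nat \<Rightarrow> 'a::comm_ring_1 mat" where
  "mat_one n m = (\<lambda>u w. if u \<in> words n m \<and> u = w then 1 else 0)"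

inductive_set subalg :: "nat \<Rightarrow> nat \<Rightarrow> 'a::comm_ring_1 mat set \<Rightarrow> 'a mat set"
  for n m :: nat and G :: "'a mat set" where
  gen: "A \<in> G \<Longrightarrow> A \<in> subalg n m G"
| one: "mat_one n m \<in> subalg n m G"
| add: "A \<in> subalg n m G \<Longrightarrow> B \<in> subalg n m G \<Longrightarrow> (\<lambda>u w. A u w + B u w) \<in> subalg n m G"
| smult: "A \<in> subalg n m G \<Longrightarrow> (\<lambda>u w. r * A u w) \<in> subalg n m G"
| mult: "A \<in> subalg n m G \<Longrightarrow> B \<in> subalg n m G \<Longrightarrow> mat_mult n m A B \<in> subalg n m G"

definition qinv :: "'a::comm_ring_1 \<Rightarrow> 'a" where
  "qinv q = (SOME y. q * y = 1)"

definition qpow :: "'a::comm_ring_1 \<Rightarrow> int \<Rightarrow> 'a" where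
  "qpow q k = (if 0 \<le> k then q ^ nat k else qinv q ^ nat (- k))"

text \<open>Action of q^h, h = sum_j h(j) h_j (only h 1, ..., h n matter):
  q^h v_w = prod_k q^{eps_{w_k}(h)} v_w = prod_k q^{h(w_k)} v_w.\<close>
definition rho_qh :: "'a::comm_ring_1 \<Rightarrow> nat \<Rightarrow> nat \<Rightarrow> (nat \<Rightarrow> int) \<Rightarrow> 'a mat" where
  "rho_qh q n m h = (\<lambda>u w. if w \<in> words n m \<and> u = w then (\<Prod>k<m. qpow q (h (w ! k))) else 0)"

text \<open>h_i - h_{i+1}, so that K_i = q^{hK i}.\<close>
definition hK :: "nat \<Rightarrow> nat \<Rightarrow> int" where
  "hK i = (\<lambda>j. (if j = i then 1 else 0) - (if j = i + 1 then 1 else 0))"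

text \<open>Action of the divided power e_i^{(l)} on V^{tensor m} (via the iterated comultiplication
  Delta(e_i) = e_i (x) K_i^{-1} + 1 (x) e_i).\<close>
definition rho_E :: "'a::comm_ring_1 \<Rightarrow> nat \<Rightarrow> nat \<Rightarrow> nat \<Rightarrow> nat \<Rightarrow> 'a mat" where
  "rho_E q n m i l = (\<lambda>u w.
     if u \<in> words n m \<and> w \<in> words n m
        \<and> card {k. k < m \<and> u ! k \<noteq> w ! k} = l
        \<and> (\<forall>k<m. u ! k \<noteq> w ! k \<longrightarrow> w ! k = i + 1 \<and> u ! k = i)
     then qpow q (\<Sum>k\<in>{k. k < m \<and> u ! k \<noteq> w ! k}.
              int (card {p. k < p \<and> p < m \<and> u ! p = w ! p \<and> w ! p = i + 1})
            - int (card {p. k < p \<and> p < m \<and> u ! p = w ! p \<and> w ! p = i}))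
     else 0)"

text \<open>Action of the divided power f_i^{(l)} (via Delta(f_i) = f_i (x) 1 + K_i (x) f_i):
  sum over sets S of l positions k with w_k = i, replacing them by i+1, with coefficient
  q^{c(S)}, c(S) = sum_{k in S} (#{p < k, p not in S, w_p = i} - #{p < k, p not in S, w_p = i+1}).\<close>
definition rho_F :: "'a::comm_ring_1 \<Rightarrow> nat \<Rightarrow> nat \<Rightarrow> nat \<Rightarrow> nat \<Rightarrow> 'a mat" where
  "rho_F q n m i l = (\<lambda>u w.
     if u \<in> words n m \<and> w \<in> words n m
        \<and> card {k. k < m \<and> u ! k \<noteq> w ! k} = l
        \<and> (\<forall>k<m. u ! k \<noteq> w ! k \<longrightarrow> w ! k = i \<and> u ! k = i + 1)
     then qpow q (\<Sum>k\<in>{k. k < m \<and> u ! k \<noteq> w ! k}.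
              int (card {p. p < k \<and> u ! p = w ! p \<and> w ! p = i})
            - int (card {p. p < k \<and> u ! p = w ! p \<and> w ! p = i + 1}))
     else 0)"

definition gens_EF :: "'a::comm_ring_1 \<Rightarrow> nat \<Rightarrow> nat \<Rightarrow> 'a mat set" where
  "gens_EF q n m = {rho_E q n m i l | i l. 1 \<le> i \<and> i < n}
                 \<union> {rho_F q n m i l | i l. 1 \<le> i \<and> i < n}"

definition gens_U :: "'a::comm_ring_1 \<Rightarrow> nat \<Rightarrow> nat \<Rightarrow> 'a mat set" where
  "gens_U q n m = range (rho_qh q n m) \<union> gens_EF q n m"

definition gens_U' :: "'a::comm_ring_1 \<Rightarrow> nat \<Rightarrow> nat \<Rightarrow> 'a mat set" where
  "gens_U' q n m = {rho_qh q n m (hK i) | i. 1 \<le> i \<and> i < n}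
                 \<union> {rho_qh q n m (- hK i) | i. 1 \<le> i \<and> i < n}
                 \<union> gens_EF q n m"

text \<open>rho_ord(U) and rho_ord(U'): R-subalgebras of End_R(V^{tensor m}) generated by the images
  of the generators (U = R (x) U_Z is spanned over R by monomials in its generators).\<close>
definition rho_U :: "'a::comm_ring_1 \<Rightarrow> nat \<Rightarrow> nat \<Rightarrow> 'a mat set" where
  "rho_U q n m = subalg n m (gens_U q n m)"

definition rho_U' :: "'a::comm_ring_1 \<Rightarrow> nat \<Rightarrow> nat \<Rightarrow> 'a mat set" where
  "rho_U' q n m = subalg n m (gens_U' q n m)"

end

theory Submission
  imports Defs "HOL-Library.Multiset"
begin

text \<open>The generators of \<open>U\<close> missing from \<open>U'\<close> are the \<open>q^h\<close>; on \<open>V^{\<otimes>m}\<close> they act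
  diagonally, with an eigenvalue that depends only on the weight of the basis vector \<open>v_w\<close>, because
  for \<open>gl_n\<close> the \<open>\<alpha>_i\<close>-weights of a word together with its length determine its content.
  So it suffices to find the weight projections in \<open>\<rho>(U')\<close>.  The commutation formula
  \<open>E_i^(a) F_i^(b) = \<Sum>_t F_i^(b-t) E_i^(a-t) [K_i; a-b, t]\<close>, proved on \<open>V^{\<otimes>m}\<close> by induction
  on \<open>m\<close> (splitting off the last tensor factor), puts the operators \<open>[K_i; 0, t]\<close> into \<open>\<rho>(U')\<close>,
  and multiplication by \<open>K_i\<close> together with the \<open>q\<close>-Pascal rule gives all \<open>[K_i; c, t]\<close>.
  As the eigenvalues of \<open>K_i\<close> are \<open>q^d\<close> with \<open>|d| \<le> m\<close>, products of such Gaussian binomials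
  interpolate the indicator of each eigenvalue, and the weight projections are products of these.\<close>

lemma qpow_0 [simp]: "qpow q 0 = 1"
  by (simp add: qpow_def)

locale unit_param =
  fixes q :: "'a::comm_ring_1"
  assumes q_unit: "q dvd 1"
begin

lemma q_mult_qinv: "q * qinv q = 1"
proof -
  from q_unit obtain y where "1 = q * y" by (auto simp: dvd_def)
  then have "\<exists>y. q * y = 1" by metis
  then show ?thesis unfolding qinv_def by (rule someI_ex)
qed

lemma qpow_add_1: "qpow q (k + 1) = q * qpow q k"
proof (cases "0 \<le> k")
  case True
  then have "nat (k + 1) = Suc (nat k)" by simp
  with True show ?thesis by (simp add: qpow_def)
next
  case False
  then have "nat (- k) = Suc (nat (- (k + 1)))" by simp
  with False have "qpow q k = qinv q * qpow q (k + 1)" by (simp add: qpow_def)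
  then show ?thesis using q_mult_qinv by (simp add: mult.assoc[symmetric])
qed

lemma qpow_add: "qpow q (a + b) = qpow q a * qpow q b"
proof (induction b rule: int_induct[where k = 0])
  case (step1 i)
  have "qpow q (a + (i + 1)) = q * qpow q (a + i)"
    using qpow_add_1[of "a + i"] by (simp add: add.assoc)
  also have "\<dots> = qpow q a * qpow q (i + 1)"
    using step1 qpow_add_1[of i] by (simp add: ac_simps)
  finally show ?case .
next
  case (step2 i)
  have "q * qpow q (a + (i - 1)) = q * (qpow q a * qpow q (i - 1))"
    using step2 qpow_add_1[of "a + (i - 1)"] qpow_add_1[of "i - 1"] by (simp add: ac_simps)
  then have "qinv q * q * qpow q (a + (i - 1)) = qinv q * q * (qpow q a * qpow q (i - 1))"
    by (simp add: mult.assoc)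
  then show ?case using q_mult_qinv by (simp add: mult.commute[of "qinv q"])
qed simp

lemma qpow_diff: "qpow q (a - b) = qpow q a * qpow q (- b)"
  using qpow_add[of a "- b"] by simp

lemma qpow_mult:
  "qpow q a * qpow q b = qpow q (a + b)"
  "qpow q a * (qpow q b * c) = qpow q (a + b) * c"
  by (simp_all add: qpow_add mult.assoc)

end

text \<open>The Gaussian binomial \<open>[N, k]\<close> in the balanced normalisation \<open>[l]_q = q^(1-l) + \<dots> + q^(l-1)\<close>
  of the paper, defined through the first \<open>q\<close>-Pascal rule.\<close>
fun qbinom_nat :: "'a::comm_ring_1 \<Rightarrow> nat \<Rightarrow> nat \<Rightarrow> 'a" where
  "qbinom_nat q N 0 = 1"
| "qbinom_nat q 0 (Suc k) = 0"
| "qbinom_nat q (Suc N) (Suc k) =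
     qpow q (- int (Suc k)) * qbinom_nat q N (Suc k) + qpow q (int N - int k) * qbinom_nat q N k"

lemma qbinom_nat_eq_0: "N < k \<Longrightarrow> qbinom_nat q N k = 0"
  by (induction q N k rule: qbinom_nat.induct) auto

lemma qbinom_nat_diag [simp]: "qbinom_nat q N N = 1"
  by (induction N) (auto simp: qbinom_nat_eq_0)

context unit_param
begin

lemma qbinom_nat_pascal_dual:
  "qbinom_nat q (Suc N) (Suc k) =
     qpow q (int (Suc k)) * qbinom_nat q N (Suc k) + qpow q (int k - int N) * qbinom_nat q N k"
proof (induction N arbitrary: k)
  case 0
  then show ?case by (cases k) auto
next
  case (Suc N)
  have A: "qbinom_nat q (Suc (Suc N)) (Suc k) = qpow q (- int (Suc k)) * qbinom_nat q (Suc N) (Suc k) + qpow q (int (Suc N) - int k) * qbinom_nat q (Suc N) k"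
    by simp
  show ?case
  proof (cases k)
    case 0
    have "qbinom_nat q (Suc N) (Suc 0) = qpow q 1 * qbinom_nat q N (Suc 0) + qpow q (- int N)"
      using Suc.IH[of 0] by simp
    then have "qbinom_nat q (Suc (Suc N)) (Suc 0) = qbinom_nat q N (Suc 0) + qpow q (- 1 - int N) + qpow q (int N + 1)"
      using A 0 by (simp add: algebra_simps qpow_mult)
    moreover have "qpow q 1 * qbinom_nat q (Suc N) (Suc 0) + qpow q (- int (Suc N)) = qbinom_nat q N (Suc 0) + qpow q (int N + 1) + qpow q (- 1 - int N)"
      by (simp add: algebra_simps qpow_mult)
    ultimately show ?thesis using 0 by simp
  next
    case (Suc j)
    define a where "a = qbinom_nat q N (Suc (Suc j))"
    define b where "b = qbinom_nat q N (Suc j)"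
    define c where "c = qbinom_nat q N j"
    have L: "qbinom_nat q (Suc (Suc N)) (Suc k) = a + (qpow q (- int (Suc k)) * qpow q (int (Suc j) - int N) + qpow q (int (Suc N) - int k) * qpow q (int (Suc j))) * b + qpow q (int (Suc N) - int k) * qpow q (int j - int N) * c"
      using A Suc.IH[of "Suc j"] Suc.IH[of j] Suc qpow_add[of "- int (Suc k)" "int (Suc k)"]
      unfolding a_def b_def c_def by (simp add: algebra_simps)
    have R: "qpow q (int (Suc k)) * qbinom_nat q (Suc N) (Suc k) + qpow q (int k - int (Suc N)) * qbinom_nat q (Suc N) k
       = a + (qpow q (int (Suc k)) * qpow q (int N - int (Suc j)) + qpow q (int k - int (Suc N)) * qpow q (- int (Suc j))) * b + qpow q (int k - int (Suc N)) * qpow q (int N - int j) * c"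
      using Suc qpow_add[of "int (Suc k)" "- int (Suc k)"]
      unfolding a_def b_def c_def by (simp add: algebra_simps)
    have "qpow q (- int (Suc k)) * qpow q (int (Suc j) - int N) = qpow q (int k - int (Suc N)) * qpow q (- int (Suc j))"
      "qpow q (int (Suc N) - int k) * qpow q (int (Suc j)) = qpow q (int (Suc k)) * qpow q (int N - int (Suc j))"
      "qpow q (int (Suc N) - int k) * qpow q (int j - int N) = qpow q (int k - int (Suc N)) * qpow q (int N - int j)"
      using Suc by (simp_all add: qpow_mult algebra_simps)
    with L R show ?thesis by (simp add: algebra_simps)
  qed
qed

end

definition qbinom :: "'a::comm_ring_1 \<Rightarrow> int \<Rightarrow> nat \<Rightarrow> 'a" where
  "qbinom q x t = (if 0 \<le> x then qbinom_nat q (nat x) t else (-1) ^ t * qbinom_nat q (nat (int t - x - 1)) t)"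

lemma qbinom_0 [simp]: "qbinom q x 0 = 1"
  by (simp add: qbinom_def)

lemma qbinom_eq_0: "0 \<le> x \<Longrightarrow> x < int t \<Longrightarrow> qbinom q x t = 0"
  by (simp add: qbinom_def qbinom_nat_eq_0 nat_less_iff)

lemma qbinom_of_nat [simp]: "qbinom q (int N) t = qbinom_nat q N t"
  by (simp add: qbinom_def)

lemma qbinom_minus_1: "qbinom q (-1) t = (-1) ^ t"
  by (simp add: qbinom_def)

lemma (in unit_param) qbinom_pascal:
  "qbinom q x (Suc k) =
    qpow q (- int (Suc k)) * qbinom q (x - 1) (Suc k) + qpow q (x - int (Suc k)) * qbinom q (x - 1) k"
proof -
  consider "x \<ge> 1" | "x = 0" | "x < 0" by linarith
  then show ?thesis
  proof cases
    case 1
    define N where "N = nat (x - 1)"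
    then have x: "x = int (Suc N)" using 1 by simp
    have "qbinom q x j = qbinom_nat q (Suc N) j" for j unfolding x by (rule qbinom_of_nat)
    moreover have "qbinom q (x - 1) j = qbinom_nat q N j" for j using x by simp
    ultimately show ?thesis using x by simp
  next
    case 2
    have "nat (1 + int k) = Suc k" by simp
    with 2 show ?thesis by (simp add: qbinom_def qpow_mult)
  next
    case 3
    define N where "N = nat (int k - x)"
    have xN: "x = int k - int N" using 3 by (simp add: N_def)
    have "qpow q (- int (Suc k)) * qbinom_nat q (Suc N) (Suc k) = qbinom_nat q N (Suc k) + qpow q (x - int (Suc k)) * qbinom_nat q N k"
      unfolding qbinom_nat_pascal_dual xN by (simp add: algebra_simps qpow_mult)
    then have H: "qpow q (- int (Suc k)) * ((-1) ^ Suc k * qbinom_nat q (Suc N) (Suc k)) = (-1) ^ Suc k * (qbinom_nat q N (Suc k) + qpow q (x - int (Suc k)) * qbinom_nat q N k)"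
      by (metis mult.left_commute)
    have "nat (int (Suc k) - x - 1) = N" "nat (int (Suc k) - (x - 1) - 1) = Suc N" "nat (int k - (x - 1) - 1) = N"
      using 3 by (simp_all add: N_def)
    with 3 have g: "qbinom q x (Suc k) = (-1) ^ Suc k * qbinom_nat q N (Suc k)"
      "qbinom q (x - 1) (Suc k) = (-1) ^ Suc k * qbinom_nat q (Suc N) (Suc k)"
      "qbinom q (x - 1) k = (-1) ^ k * qbinom_nat q N k"
      by (simp_all add: qbinom_def del: power_Suc)
    show ?thesis unfolding g H by (simp add: algebra_simps)
  qed
qed

definition hK_weight :: "nat \<Rightarrow> nat list \<Rightarrow> int" where
  "hK_weight i w = sum_list (map (hK i) w)"

lemma hK_weight_Nil [simp]: "hK_weight i [] = 0"
  by (simp add: hK_weight_def)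

lemma hK_weight_snoc [simp]: "hK_weight i (w @ [z]) = hK_weight i w + hK i z"
  by (simp add: hK_weight_def)

lemma words_0: "words n 0 = {[]}"
  by (auto simp: words_def)

lemma snoc_in_words_Suc_iff [simp]: "u @ [x] \<in> words n (Suc m) \<longleftrightarrow> u \<in> words n m \<and> x \<in> {1..n}"
  by (auto simp: words_def)

lemma words_Suc_cases:
  assumes "w \<in> words n (Suc m)"
  obtains u x where "w = u @ [x]" "u \<in> words n m" "x \<in> {1..n}"
proof -
  have "w \<noteq> []" using assms by (auto simp: words_def)
  then obtain u x where "w = u @ [x]" by (metis rev_exhaust)
  with assms that show ?thesis by simp
qed

lemma words_Suc: "words n (Suc m) = (\<lambda>(v, z). v @ [z]) ` (words n m \<times> {1..n})"
  by (auto elim!: words_Suc_cases)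

lemma finite_words: "finite (words n m)"
  by (induction m) (simp_all add: words_0 words_Suc)

lemma mat_mult_Suc:
  "mat_mult n (Suc m) A B u w = (\<Sum>v\<in>words n m. \<Sum>z\<in>{1..n}. A u (v @ [z]) * B (v @ [z]) w)"
proof -
  have "inj_on (\<lambda>(v, z). v @ [z]) (words n m \<times> {1..n})" by (auto simp: inj_on_def)
  then have "mat_mult n (Suc m) A B u w = (\<Sum>(v, z)\<in>words n m \<times> {1..n}. A u (v @ [z]) * B (v @ [z]) w)"
    unfolding mat_mult_def words_Suc by (subst sum.reindex) (auto simp: case_prod_unfold)
  then show ?thesis by (simp add: sum.cartesian_product)
qed

text \<open>With \<open>S = diff_pos m u w\<close> the set of replaced positions, \<open>E_exp\<close> and \<open>F_exp\<close>
  are the exponents \<open>c(S)\<close> in the definitions of \<open>rho_E\<close> and \<open>rho_F\<close>.\<close>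

definition diff_pos :: "nat \<Rightarrow> nat list \<Rightarrow> nat list \<Rightarrow> nat set" where
  "diff_pos m u w = {k. k < m \<and> u ! k \<noteq> w ! k}"

definition replaces :: "nat \<Rightarrow> nat \<Rightarrow> nat \<Rightarrow> nat list \<Rightarrow> nat list \<Rightarrow> bool" where
  "replaces m a b u w \<longleftrightarrow> (\<forall>k<m. u ! k \<noteq> w ! k \<longrightarrow> w ! k = a \<and> u ! k = b)"

definition E_exp :: "nat \<Rightarrow> nat \<Rightarrow> nat list \<Rightarrow> nat list \<Rightarrow> int" where
  "E_exp i m u w = (\<Sum>k\<in>diff_pos m u w.
     int (card {p. k < p \<and> p < m \<and> u ! p = w ! p \<and> w ! p = i + 1})
   - int (card {p. k < p \<and> p < m \<and> u ! p = w ! p \<and> w ! p = i}))"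

definition F_exp :: "nat \<Rightarrow> nat \<Rightarrow> nat list \<Rightarrow> nat list \<Rightarrow> int" where
  "F_exp i m u w = (\<Sum>k\<in>diff_pos m u w.
     int (card {p. p < k \<and> u ! p = w ! p \<and> w ! p = i})
   - int (card {p. p < k \<and> u ! p = w ! p \<and> w ! p = i + 1}))"

definition common_hK_weight :: "nat \<Rightarrow> nat list \<Rightarrow> nat list \<Rightarrow> int" where
  "common_hK_weight i u w =
     int (card {p. p < length w \<and> u ! p = w ! p \<and> w ! p = i})
   - int (card {p. p < length w \<and> u ! p = w ! p \<and> w ! p = i + 1})"

lemma rho_E_eq:
  "rho_E q n m i l u w = (if u \<in> words n m \<and> w \<in> words n m \<and> card (diff_pos m u w) = l
     \<and> replaces m (i + 1) i u w then qpow q (E_exp i m u w) else 0)"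
  unfolding rho_E_def diff_pos_def replaces_def E_exp_def by (rule refl)

lemma rho_F_eq:
  "rho_F q n m i l u w = (if u \<in> words n m \<and> w \<in> words n m \<and> card (diff_pos m u w) = l
     \<and> replaces m i (i + 1) u w then qpow q (F_exp i m u w) else 0)"
  unfolding rho_F_def diff_pos_def replaces_def F_exp_def by (rule refl)

lemma rho_E_nonzero_words: "rho_E q n m i l u w \<noteq> 0 \<Longrightarrow> u \<in> words n m \<and> w \<in> words n m"
  by (simp add: rho_E_def split: if_splits)

lemma rho_F_nonzero_words: "rho_F q n m i l u w \<noteq> 0 \<Longrightarrow> u \<in> words n m \<and> w \<in> words n m"
  by (simp add: rho_F_def split: if_splits)

lemma nonzero_words_Suc_cases:
  assumes "u \<in> words n (Suc m) \<and> w \<in> words n (Suc m)"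
  obtains u' x w' z where "u = u' @ [x]" "w = w' @ [z]"
    "u' \<in> words n m" "w' \<in> words n m" "x \<in> {1..n}" "z \<in> {1..n}"
  using assms by (auto elim!: words_Suc_cases)

lemma rho_E_Nil: "rho_E q n 0 i l u w = (if u = [] \<and> w = [] \<and> l = 0 then 1 else 0)"
  by (auto simp: rho_E_def words_def)

lemma rho_F_Nil: "rho_F q n 0 i l u w = (if u = [] \<and> w = [] \<and> l = 0 then 1 else 0)"
  by (auto simp: rho_F_def words_def)

context
  fixes u w :: "nat list" and m :: nat
  assumes lengths: "length u = m" "length w = m"
begin

lemma diff_pos_snoc:
  "diff_pos (Suc m) (u @ [x]) (w @ [z]) = (if x = z then diff_pos m u w else insert m (diff_pos m u w))"
  using lengths by (auto simp: diff_pos_def nth_append less_Suc_eq)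

lemma card_diff_pos_snoc:
  "card (diff_pos (Suc m) (u @ [x]) (w @ [z])) = card (diff_pos m u w) + (if x = z then 0 else 1)"
  by (simp add: diff_pos_snoc) (simp add: diff_pos_def)

lemma replaces_snoc:
  "replaces (Suc m) a b (u @ [x]) (w @ [z]) \<longleftrightarrow> replaces m a b u w \<and> (x \<noteq> z \<longrightarrow> z = a \<and> x = b)"
  using lengths by (auto simp: replaces_def nth_append less_Suc_eq)

lemma card_agree_snoc:
  "card {p. P p \<and> p < Suc m \<and> (u @ [x]) ! p = (w @ [z]) ! p \<and> (w @ [z]) ! p = c}
   = card {p. P p \<and> p < m \<and> u ! p = w ! p \<and> w ! p = c} + (if P m \<and> x = z \<and> z = c then 1 else 0)"
proof -
  have "{p. P p \<and> p < Suc m \<and> (u @ [x]) ! p = (w @ [z]) ! p \<and> (w @ [z]) ! p = c}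
      = {p. P p \<and> p < m \<and> u ! p = w ! p \<and> w ! p = c} \<union> (if P m \<and> x = z \<and> z = c then {m} else {})"
    using lengths by (auto simp: nth_append less_Suc_eq)
  then show ?thesis by (simp add: card_insert_if)
qed

lemma card_agree_before_snoc:
  "k \<le> m \<Longrightarrow> {p. p < k \<and> (u @ [x]) ! p = (w @ [z]) ! p \<and> (w @ [z]) ! p = c}
     = {p. p < k \<and> u ! p = w ! p \<and> w ! p = c}"
  using lengths by (auto simp: nth_append)

lemma E_exp_snoc:
  "E_exp i (Suc m) (u @ [x]) (w @ [z])
   = E_exp i m u w - (if x = z then int (card (diff_pos m u w)) * hK i z else 0)"
proof -
  have no_pos: "{p. m < p \<and> p < m \<and> P p} = {}" for P by auto
  have "E_exp i (Suc m) (u @ [x]) (w @ [z]) = (\<Sum>k\<in>diff_pos m u w.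
       int (card {p. k < p \<and> p < m \<and> u ! p = w ! p \<and> w ! p = i + 1})
     - int (card {p. k < p \<and> p < m \<and> u ! p = w ! p \<and> w ! p = i}) - (if x = z then hK i z else 0))"
    unfolding E_exp_def diff_pos_snoc card_agree_snoc[where P = "\<lambda>p. _ < p"]
    by (auto simp: hK_def diff_pos_def no_pos intro!: sum.cong)
  then show ?thesis by (simp add: E_exp_def sum_subtractf)
qed

lemma F_exp_snoc:
  "F_exp i (Suc m) (u @ [x]) (w @ [z]) = F_exp i m u w + (if x = z then 0 else common_hK_weight i u w)"
proof -
  define f where "f k = int (card {p. p < k \<and> u ! p = w ! p \<and> w ! p = i})
    - int (card {p. p < k \<and> u ! p = w ! p \<and> w ! p = i + 1})" for k
  have "F_exp i (Suc m) (u @ [x]) (w @ [z]) = (\<Sum>k\<in>diff_pos (Suc m) (u @ [x]) (w @ [z]). f k)"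
    unfolding F_exp_def f_def by (intro sum.cong refl) (simp add: card_agree_before_snoc diff_pos_def)
  moreover have "F_exp i m u w = (\<Sum>k\<in>diff_pos m u w. f k)"
    by (simp add: F_exp_def f_def)
  moreover have "f m = common_hK_weight i u w"
    using lengths by (simp add: f_def common_hK_weight_def)
  moreover have "finite (diff_pos m u w)" "m \<notin> diff_pos m u w"
    by (simp_all add: diff_pos_def)
  ultimately show ?thesis by (simp add: diff_pos_snoc)
qed

lemma common_hK_weight_snoc:
  "common_hK_weight i (u @ [x]) (w @ [z]) = common_hK_weight i u w + (if x = z then hK i z else 0)"
  using lengths card_agree_snoc[where P = "\<lambda>_. True"]
  by (simp add: common_hK_weight_def hK_def)

end

context unit_param
begin

lemma rho_E_snoc:
  assumes "u \<in> words n m" "w \<in> words n m" "x \<in> {1..n}" "z \<in> {1..n}"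
  shows "rho_E q n (Suc m) i l (u @ [x]) (w @ [z]) =
    (if x = z then qpow q (- int l * hK i z) * rho_E q n m i l u w
     else if z = i + 1 \<and> x = i \<and> 0 < l then rho_E q n m i (l - 1) u w else 0)"
proof -
  have lengths: "length u = m" "length w = m" using assms by (simp_all add: words_def)
  note snoc = card_diff_pos_snoc[OF lengths] replaces_snoc[OF lengths] E_exp_snoc[OF lengths]
  show ?thesis
  proof (cases "x = z")
    case True
    have "qpow q (E_exp i m u w - int l * hK i z) = qpow q (- int l * hK i z) * qpow q (E_exp i m u w)"
      by (simp flip: qpow_add)
    with True assms show ?thesis by (simp add: rho_E_eq snoc)
  next
    case False
    with assms show ?thesis by (auto simp: rho_E_eq snoc)
  qed
qed

lemma rho_F_snoc_common_hK_weight: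
  assumes "u \<in> words n m" "w \<in> words n m" "x \<in> {1..n}" "z \<in> {1..n}"
  shows "rho_F q n (Suc m) i l (u @ [x]) (w @ [z]) =
    (if x = z then rho_F q n m i l u w
     else if z = i \<and> x = i + 1 \<and> 0 < l then qpow q (common_hK_weight i u w) * rho_F q n m i (l - 1) u w
     else 0)"
proof -
  have lengths: "length u = m" "length w = m" using assms by (simp_all add: words_def)
  note snoc = card_diff_pos_snoc[OF lengths] replaces_snoc[OF lengths] F_exp_snoc[OF lengths]
  show ?thesis
  proof (cases "x = z")
    case True
    with assms show ?thesis by (simp add: rho_F_eq snoc)
  next
    case False
    with assms show ?thesis by (auto simp: rho_F_eq snoc qpow_add)
  qed
qed

lemma hK_weight_rho_E: "rho_E q n m i l u w \<noteq> 0 \<Longrightarrow> hK_weight i u = hK_weight i w + 2 * int l"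
proof (induction m arbitrary: l u w)
  case 0
  then show ?case by (simp add: rho_E_Nil split: if_splits)
next
  case (Suc m)
  from rho_E_nonzero_words[OF Suc.prems] obtain u' x w' z where
    uw: "u = u' @ [x]" "w = w' @ [z]" and snoc: "u' \<in> words n m" "w' \<in> words n m" "x \<in> {1..n}" "z \<in> {1..n}"
    by (rule nonzero_words_Suc_cases)
  note E_snoc = Suc.prems[unfolded uw rho_E_snoc[OF snoc]]
  show ?case
  proof (cases "x = z")
    case True
    with E_snoc have "rho_E q n m i l u' w' \<noteq> 0" by auto
    with True show ?thesis by (simp add: uw Suc.IH)
  next
    case False
    with E_snoc have "z = i + 1 \<and> x = i \<and> 0 < l" "rho_E q n m i (l - 1) u' w' \<noteq> 0"
      by (auto split: if_splits)
    with Suc.IH show ?thesis by (force simp: uw hK_def of_nat_diff)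
  qed
qed

lemma common_hK_weight_rho_F:
  "rho_F q n m i l u w \<noteq> 0 \<Longrightarrow> common_hK_weight i u w = hK_weight i w - int l"
proof (induction m arbitrary: l u w)
  case 0
  then show ?case by (simp add: rho_F_Nil common_hK_weight_def split: if_splits)
next
  case (Suc m)
  from rho_F_nonzero_words[OF Suc.prems] obtain u' x w' z where
    uw: "u = u' @ [x]" "w = w' @ [z]" and snoc: "u' \<in> words n m" "w' \<in> words n m" "x \<in> {1..n}" "z \<in> {1..n}"
    by (rule nonzero_words_Suc_cases)
  have lengths: "length u' = length w'" using snoc by (simp add: words_def)
  note F_snoc = Suc.prems[unfolded uw rho_F_snoc_common_hK_weight[OF snoc]]
  show ?case
  proof (cases "x = z")
    case True
    with F_snoc have "rho_F q n m i l u' w' \<noteq> 0" by simp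
    with True lengths show ?thesis by (simp add: uw Suc.IH common_hK_weight_snoc)
  next
    case False
    with F_snoc have "z = i \<and> x = i + 1 \<and> 0 < l" "rho_F q n m i (l - 1) u' w' \<noteq> 0"
      by (auto split: if_splits)
    with Suc.IH False lengths show ?thesis by (force simp: uw common_hK_weight_snoc hK_def of_nat_diff)
  qed
qed

lemma rho_F_snoc:
  assumes "u \<in> words n m" "w \<in> words n m" "x \<in> {1..n}" "z \<in> {1..n}"
  shows "rho_F q n (Suc m) i l (u @ [x]) (w @ [z]) =
    (if x = z then rho_F q n m i l u w
     else if z = i \<and> x = i + 1 \<and> 0 < l then qpow q (hK_weight i w - int l + 1) * rho_F q n m i (l - 1) u w
     else 0)"
proof -
  have "qpow q (common_hK_weight i u w) * rho_F q n m i (l - 1) u w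
      = qpow q (hK_weight i w - int l + 1) * rho_F q n m i (l - 1) u w" if "0 < l"
  proof (cases "rho_F q n m i (l - 1) u w = 0")
    case False
    with that have "common_hK_weight i u w = hK_weight i w - int l + 1"
      by (simp add: common_hK_weight_rho_F of_nat_diff)
    then show ?thesis by simp
  qed simp
  then show ?thesis using rho_F_snoc_common_hK_weight[OF assms] by auto
qed

end

lemma sum_mult_delta_two:
  fixes f :: "'b \<Rightarrow> 'a::comm_ring_1"
  assumes "finite Z" "y \<in> Z" "c \<in> Z"
  shows "(\<Sum>z\<in>Z. f z * ((if z = y then A else 0) + (if P \<and> z = c then B else 0)))
    = f y * A + (if P then f c * B else 0)"
  using assms by (simp add: distrib_left sum.distrib if_distrib[of "(*) _"] cong: if_cong)

definition EF_mat :: "'a::comm_ring_1 \<Rightarrow> nat \<Rightarrow> nat \<Rightarrow> nat \<Rightarrow> nat \<Rightarrow> nat \<Rightarrow> 'a mat" where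
  "EF_mat q n m i a b = mat_mult n m (rho_E q n m i a) (rho_F q n m i b)"

definition FE_mat :: "'a::comm_ring_1 \<Rightarrow> nat \<Rightarrow> nat \<Rightarrow> nat \<Rightarrow> nat \<Rightarrow> nat \<Rightarrow> 'a mat" where
  "FE_mat q n m i b a = mat_mult n m (rho_F q n m i b) (rho_E q n m i a)"

context unit_param
begin

lemma EF_snoc_sum:
  assumes i: "1 \<le> i" "i < n"
    and words: "u \<in> words n m" "v \<in> words n m" "w \<in> words n m" "x \<in> {1..n}" "y \<in> {1..n}"
  shows "(\<Sum>z\<in>{1..n}. rho_E q n (Suc m) i a (u @ [x]) (v @ [z]) * rho_F q n (Suc m) i b (v @ [z]) (w @ [y])) =
    (if y = i then
       (if x = i then qpow q (- int a) * (rho_E q n m i a u v * rho_F q n m i b v w)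
          + (if 0 < a \<and> 0 < b then qpow q (hK_weight i w - int b + 1) * (rho_E q n m i (a - 1) u v * rho_F q n m i (b - 1) v w) else 0)
        else if x = i + 1 then (if 0 < b then qpow q (int a + hK_weight i w - int b + 1) * (rho_E q n m i a u v * rho_F q n m i (b - 1) v w) else 0)
        else 0)
     else if y = i + 1 then
       (if x = i + 1 then qpow q (int a) * (rho_E q n m i a u v * rho_F q n m i b v w)
        else if x = i then (if 0 < a then rho_E q n m i (a - 1) u v * rho_F q n m i b v w else 0)
        else 0)
     else (if x = y then rho_E q n m i a u v * rho_F q n m i b v w else 0))"
proof -
  have i1: "i + 1 \<in> {1..n}" using i by simp
  have "rho_F q n (Suc m) i b (v @ [z]) (w @ [y]) = (if z = y then rho_F q n m i b v w else 0)
      + (if (y = i \<and> 0 < b) \<and> z = i + 1 then qpow q (hK_weight i w - int b + 1) * rho_F q n m i (b - 1) v w else 0)"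
    if "z \<in> {1..n}" for z
    using rho_F_snoc[OF words(2,3) that words(5)] by auto
  then have "(\<Sum>z\<in>{1..n}. rho_E q n (Suc m) i a (u @ [x]) (v @ [z]) * rho_F q n (Suc m) i b (v @ [z]) (w @ [y]))
    = (\<Sum>z\<in>{1..n}. rho_E q n (Suc m) i a (u @ [x]) (v @ [z]) * ((if z = y then rho_F q n m i b v w else 0)
      + (if (y = i \<and> 0 < b) \<and> z = i + 1 then qpow q (hK_weight i w - int b + 1) * rho_F q n m i (b - 1) v w else 0)))"
    by (intro sum.cong) simp_all
  also have "\<dots> = rho_E q n (Suc m) i a (u @ [x]) (v @ [y]) * rho_F q n m i b v w
      + (if y = i \<and> 0 < b then rho_E q n (Suc m) i a (u @ [x]) (v @ [i + 1]) * (qpow q (hK_weight i w - int b + 1) * rho_F q n m i (b - 1) v w) else 0)"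
    using words(5) i1 by (subst sum_mult_delta_two) simp_all
  also have "\<dots> = (if y = i then
       (if x = i then qpow q (- int a) * (rho_E q n m i a u v * rho_F q n m i b v w)
          + (if 0 < a \<and> 0 < b then qpow q (hK_weight i w - int b + 1) * (rho_E q n m i (a - 1) u v * rho_F q n m i (b - 1) v w) else 0)
        else if x = i + 1 then (if 0 < b then qpow q (int a + hK_weight i w - int b + 1) * (rho_E q n m i a u v * rho_F q n m i (b - 1) v w) else 0)
        else 0)
     else if y = i + 1 then
       (if x = i + 1 then qpow q (int a) * (rho_E q n m i a u v * rho_F q n m i b v w)
        else if x = i then (if 0 < a then rho_E q n m i (a - 1) u v * rho_F q n m i b v w else 0)
        else 0)
     else (if x = y then rho_E q n m i a u v * rho_F q n m i b v w else 0))"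
    unfolding rho_E_snoc[OF words(1,2,4,5)] rho_E_snoc[OF words(1,2,4) i1]
    by (auto simp: hK_def qpow_add qpow_diff ac_simps)
  finally show ?thesis .
qed


lemma FE_snoc_sum:
  assumes i: "1 \<le> i" "i < n"
    and words: "u \<in> words n m" "v \<in> words n m" "w \<in> words n m" "x \<in> {1..n}" "y \<in> {1..n}"
  shows "(\<Sum>z\<in>{1..n}. rho_F q n (Suc m) i b (u @ [x]) (v @ [z]) * rho_E q n (Suc m) i a (v @ [z]) (w @ [y])) =
    (if y = i then
       (if x = i then qpow q (- int a) * (rho_F q n m i b u v * rho_E q n m i a v w)
        else if x = i + 1 then (if 0 < b then qpow q (hK_weight i w + int a - int b + 1) * (rho_F q n m i (b - 1) u v * rho_E q n m i a v w) else 0)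
        else 0)
     else if y = i + 1 then
       (if x = i + 1 then qpow q (int a) * (rho_F q n m i b u v * rho_E q n m i a v w)
          + (if 0 < a \<and> 0 < b then qpow q (hK_weight i w + 2 * int a - int b - 1) * (rho_F q n m i (b - 1) u v * rho_E q n m i (a - 1) v w) else 0)
        else if x = i then (if 0 < a then rho_F q n m i b u v * rho_E q n m i (a - 1) v w else 0)
        else 0)
     else (if x = y then rho_F q n m i b u v * rho_E q n m i a v w else 0))"
proof -
  have i0: "i \<in> {1..n}" using i by simp
  have F_E: "rho_F q n (Suc m) i b (u @ [x]) (v @ [z]) * rho_E q n m i a' v w
    = (if x = z then rho_F q n m i b u v
       else if z = i \<and> x = i + 1 \<and> 0 < b
       then qpow q (hK_weight i w + 2 * int a' - int b + 1) * rho_F q n m i (b - 1) u v else 0)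
      * rho_E q n m i a' v w" if "z \<in> {1..n}" for z a'
    using rho_F_snoc[OF words(1,2,4) that] hK_weight_rho_E[of n m i a' v w]
    by (cases "rho_E q n m i a' v w = 0") auto
  have "rho_E q n (Suc m) i a (v @ [z]) (w @ [y]) = (if z = y then qpow q (- int a * hK i y) * rho_E q n m i a v w else 0)
      + (if (y = i + 1 \<and> 0 < a) \<and> z = i then rho_E q n m i (a - 1) v w else 0)"
    if "z \<in> {1..n}" for z
    using rho_E_snoc[OF words(2,3) that words(5)] by auto
  then have "(\<Sum>z\<in>{1..n}. rho_F q n (Suc m) i b (u @ [x]) (v @ [z]) * rho_E q n (Suc m) i a (v @ [z]) (w @ [y]))
    = (\<Sum>z\<in>{1..n}. rho_F q n (Suc m) i b (u @ [x]) (v @ [z]) * ((if z = y then qpow q (- int a * hK i y) * rho_E q n m i a v w else 0)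
      + (if (y = i + 1 \<and> 0 < a) \<and> z = i then rho_E q n m i (a - 1) v w else 0)))"
    by (intro sum.cong) simp_all
  also have "\<dots> = qpow q (- int a * hK i y) * (rho_F q n (Suc m) i b (u @ [x]) (v @ [y]) * rho_E q n m i a v w)
      + (if y = i + 1 \<and> 0 < a then rho_F q n (Suc m) i b (u @ [x]) (v @ [i]) * rho_E q n m i (a - 1) v w else 0)"
    using words(5) i0 by (subst sum_mult_delta_two) (simp_all add: ac_simps)
  also have "\<dots> = (if y = i then
       (if x = i then qpow q (- int a) * (rho_F q n m i b u v * rho_E q n m i a v w)
        else if x = i + 1 then (if 0 < b then qpow q (hK_weight i w + int a - int b + 1) * (rho_F q n m i (b - 1) u v * rho_E q n m i a v w) else 0)
        else 0)
     else if y = i + 1 then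
       (if x = i + 1 then qpow q (int a) * (rho_F q n m i b u v * rho_E q n m i a v w)
          + (if 0 < a \<and> 0 < b then qpow q (hK_weight i w + 2 * int a - int b - 1) * (rho_F q n m i (b - 1) u v * rho_E q n m i (a - 1) v w) else 0)
        else if x = i then (if 0 < a then rho_F q n m i b u v * rho_E q n m i (a - 1) v w else 0)
        else 0)
     else (if x = y then rho_F q n m i b u v * rho_E q n m i a v w else 0))"
    unfolding F_E[OF words(5)] F_E[OF i0]
    by (auto simp: hK_def qpow_mult mult.assoc of_nat_diff) (simp_all add: algebra_simps)
  finally show ?thesis .
qed

lemma EF_mat_snoc:
  assumes i: "1 \<le> i" "i < n"
    and words: "u \<in> words n m" "w \<in> words n m" "x \<in> {1..n}" "y \<in> {1..n}"
  shows "EF_mat q n (Suc m) i a b (u @ [x]) (w @ [y]) =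
    (if y = i then
       (if x = i then qpow q (- int a) * EF_mat q n m i a b u w
          + (if 0 < a \<and> 0 < b then qpow q (hK_weight i w - int b + 1) * EF_mat q n m i (a - 1) (b - 1) u w else 0)
        else if x = i + 1 then (if 0 < b then qpow q (int a + hK_weight i w - int b + 1) * EF_mat q n m i a (b - 1) u w else 0)
        else 0)
     else if y = i + 1 then
       (if x = i + 1 then qpow q (int a) * EF_mat q n m i a b u w
        else if x = i then (if 0 < a then EF_mat q n m i (a - 1) b u w else 0)
        else 0)
     else (if x = y then EF_mat q n m i a b u w else 0))"
  unfolding EF_mat_def mat_mult_Suc
  by (subst sum.cong[OF refl EF_snoc_sum[OF i words(1) _ words(2-4)]])
    (simp_all add: mat_mult_def sum.distrib sum_distrib_left)

lemma FE_mat_snoc: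
  assumes i: "1 \<le> i" "i < n"
    and words: "u \<in> words n m" "w \<in> words n m" "x \<in> {1..n}" "y \<in> {1..n}"
  shows "FE_mat q n (Suc m) i b a (u @ [x]) (w @ [y]) =
    (if y = i then
       (if x = i then qpow q (- int a) * FE_mat q n m i b a u w
        else if x = i + 1 then (if 0 < b then qpow q (hK_weight i w + int a - int b + 1) * FE_mat q n m i (b - 1) a u w else 0)
        else 0)
     else if y = i + 1 then
       (if x = i + 1 then qpow q (int a) * FE_mat q n m i b a u w
          + (if 0 < a \<and> 0 < b then qpow q (hK_weight i w + 2 * int a - int b - 1) * FE_mat q n m i (b - 1) (a - 1) u w else 0)
        else if x = i then (if 0 < a then FE_mat q n m i b (a - 1) u w else 0)
        else 0)
     else (if x = y then FE_mat q n m i b a u w else 0))"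
  unfolding FE_mat_def mat_mult_Suc
  by (subst sum.cong[OF refl FE_snoc_sum[OF i words(1) _ words(2-4)]])
    (simp_all add: mat_mult_def sum.distrib sum_distrib_left)

end
lemma sum_atMost_shift_if:
  "(\<Sum>t\<le>(M::nat). if t < M then d t else 0) = (\<Sum>t\<le>M. if 0 < t then d (t - 1) else (0::'a::comm_ring_1))"
proof -
  have "(\<Sum>t\<le>M. if t < M then d t else 0) = (\<Sum>t<M. d t)"
  proof -
    have e: "{t\<in>{..M}. t < M} = {..<M}" by auto
    show ?thesis using sum.inter_filter[of "{..M}" d "\<lambda>t. t < M"] unfolding e by simp
  qed
  moreover have "(\<Sum>t\<le>M. if 0 < t then d (t-1) else 0) = (\<Sum>t<M. d t)"
  proof (cases M)
    case 0 then show ?thesis by simp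
  next
    case (Suc k)
    then show ?thesis by (simp only: sum.atMost_Suc_shift lessThan_Suc_atMost) simp
  qed
  ultimately show ?thesis by simp
qed

lemma sum_atMost_extend:
  "K \<le> M \<Longrightarrow> (\<Sum>t\<le>(K::nat). h t) = (\<Sum>t\<le>M. if t \<le> K then h t else (0::'a::comm_ring_1))"
proof -
  assume "K \<le> M"
  then have "{t\<in>{..M}. t \<le> K} = {..K}" by auto
  then show ?thesis using sum.inter_filter[of "{..M}" h "\<lambda>t. t \<le> K"] by simp
qed

lemma EF_mat_outside: "U \<notin> words n m \<or> W \<notin> words n m \<Longrightarrow> EF_mat q n m i a b U W = 0"
  unfolding EF_mat_def mat_mult_def rho_E_def rho_F_def by (auto intro!: sum.neutral)

lemma FE_mat_outside: "U \<notin> words n m \<or> W \<notin> words n m \<Longrightarrow> FE_mat q n m i b a U W = 0"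
  unfolding FE_mat_def mat_mult_def rho_E_def rho_F_def by (auto intro!: sum.neutral)

lemma EF_mat_Nil: "EF_mat q n 0 i a b [] [] = (if a = 0 \<and> b = 0 then 1 else 0)"
  unfolding EF_mat_def mat_mult_def words_0 by (simp add: rho_E_Nil rho_F_Nil)

lemma FE_mat_Nil: "FE_mat q n 0 i b a [] [] = (if a = 0 \<and> b = 0 then 1 else 0)"
  unfolding FE_mat_def mat_mult_def words_0 by (simp add: rho_E_Nil rho_F_Nil)

lemma EF_commutation_Nil:
  "EF_mat q n 0 i a b U W = (\<Sum>t\<le>min a b. FE_mat q n 0 i (b-t) (a-t) U W * qbinom q (hK_weight i W + int a - int b) t)"
proof (cases "U = [] \<and> W = []")
  case False
  then have "U \<notin> words n 0 \<or> W \<notin> words n 0" by (auto simp: words_0)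
  then show ?thesis by (simp add: EF_mat_outside FE_mat_outside)
next
  case True
  show ?thesis
  proof (cases "a = b")
    case True
    have "(\<Sum>t\<le>min a b. FE_mat q n 0 i (b-t) (a-t) [] [] * qbinom q (hK_weight i [] + int a - int b) t)
        = (\<Sum>t\<le>a. if t = a then qbinom q 0 a else 0)"
      using True by (intro sum.cong refl) (auto simp: FE_mat_Nil)
    also have "\<dots> = (if a = 0 then 1 else 0)" by (simp add: qbinom_eq_0)
    finally show ?thesis using \<open>U = [] \<and> W = []\<close> True by (simp add: EF_mat_Nil)
  next
    case False
    have "(\<Sum>t\<le>min a b. FE_mat q n 0 i (b-t) (a-t) [] [] * qbinom q (hK_weight i [] + int a - int b) t) = 0"
      using False by (intro sum.neutral) (auto simp: FE_mat_Nil)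
    moreover have "\<not> (a = 0 \<and> b = 0)" using False by auto
    ultimately show ?thesis using \<open>U = [] \<and> W = []\<close> by (simp add: EF_mat_Nil)
  qed
qed

context unit_param
begin

lemma qbinom_pascal_mult:
  assumes t: "0 < t"
  shows "qpow q c * qbinom q x t = qpow q (c - int t) * qbinom q (x - 1) t + qpow q (c + x - int t) * qbinom q (x - 1) (t - 1)"
proof -
  obtain k where k: "t = Suc k" using t by (cases t) auto
  have "qpow q c * qbinom q x t = qpow q c * (qpow q (- int t) * qbinom q (x - 1) t + qpow q (x - int t) * qbinom q (x - 1) (t-1))"
    using qbinom_pascal[of x k] k by simp
  also have "\<dots> = (qpow q c * qpow q (- int t)) * qbinom q (x - 1) t + (qpow q c * qpow q (x - int t)) * qbinom q (x - 1) (t - 1)"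
    by (simp add: algebra_simps)
  also have "\<dots> = qpow q (c - int t) * qbinom q (x - 1) t + qpow q (c + x - int t) * qbinom q (x - 1) (t - 1)"
    unfolding qpow_mult(1) by (simp add: algebra_simps)
  finally show ?thesis .
qed

text \<open>The coefficient identities behind the induction step of the commutation formula.  The suffix
  names the last letters of the output and input word (\<open>i1\<close> standing for \<open>i + 1\<close>).\<close>
lemma commutation_sum_i1_i1:
  "qpow q (int a) * (\<Sum>t\<le>min a b. Fm (b-t) (a-t) * qbinom q (mw + int a - int b) t) =
   (\<Sum>t\<le>min a b. (qpow q (int (a-t)) * Fm (b-t) (a-t) + (if 0 < a-t \<and> 0 < b-t then qpow q (mw + 2*int(a-t) - int(b-t) - 1) * Fm (b-t-1) (a-t-1) else 0)) * qbinom q (mw + int a - int b - 1) t)"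
proof -
  define M where "M = min a b"
  define X where "X = mw + int a - int b"
  define d where "d t = qpow q (mw + 2*int(a-t) - int(b-t) - 1) * Fm (b-t-1) (a-t-1) * qbinom q (X - 1) t" for t
  have "(\<Sum>t\<le>min a b. (qpow q (int (a-t)) * Fm (b-t) (a-t) + (if 0 < a-t \<and> 0 < b-t then qpow q (mw + 2*int(a-t) - int(b-t) - 1) * Fm (b-t-1) (a-t-1) else 0)) * qbinom q (mw + int a - int b - 1) t)
     = (\<Sum>t\<le>M. qpow q (int (a-t)) * Fm (b-t) (a-t) * qbinom q (X - 1) t + (if t < M then d t else 0))"
    unfolding M_def X_def d_def by (rule sum.cong) (auto simp: algebra_simps)
  also have "\<dots> = (\<Sum>t\<le>M. qpow q (int (a-t)) * Fm (b-t) (a-t) * qbinom q (X - 1) t) + (\<Sum>t\<le>M. if t < M then d t else 0)"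
    by (simp add: sum.distrib)
  also have "\<dots> = (\<Sum>t\<le>M. qpow q (int (a-t)) * Fm (b-t) (a-t) * qbinom q (X - 1) t + (if 0 < t then d (t-1) else 0))"
    unfolding sum_atMost_shift_if by (simp add: sum.distrib)
  also have "\<dots> = (\<Sum>t\<le>M. qpow q (int a) * (Fm (b-t) (a-t) * qbinom q X t))"
  proof (rule sum.cong[OF refl])
    fix t assume t: "t \<in> {..M}"
    then have ta: "t \<le> a" "t \<le> b" by (auto simp: M_def)
    show "qpow q (int (a-t)) * Fm (b-t) (a-t) * qbinom q (X - 1) t + (if 0 < t then d (t-1) else 0) = qpow q (int a) * (Fm (b-t) (a-t) * qbinom q X t)"
    proof (cases "t = 0")
      case True then show ?thesis by simp
    next
      case False
      have e1: "b - (t - 1) - 1 = b - t" "a - (t - 1) - 1 = a - t" using False by auto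
      have dd: "d (t-1) = qpow q (mw + 2 * int a - int b - int t) * Fm (b-t) (a-t) * qbinom q (X - 1) (t-1)"
        unfolding d_def e1 using False ta by (simp add: of_nat_diff algebra_simps)
      have P: "qpow q (int a) * qbinom q X t = qpow q (int a - int t) * qbinom q (X - 1) t + qpow q (mw + 2 * int a - int b - int t) * qbinom q (X - 1) (t - 1)"
        using qbinom_pascal_mult[of t "int a" X] False unfolding X_def by (simp add: algebra_simps)
      have "qpow q (int (a-t)) * Fm (b-t) (a-t) * qbinom q (X - 1) t + (if 0 < t then d (t-1) else 0)
         = (qpow q (int a - int t) * qbinom q (X - 1) t + qpow q (mw + 2 * int a - int b - int t) * qbinom q (X - 1) (t - 1)) * Fm (b-t) (a-t)"
        unfolding dd using False ta by (simp add: algebra_simps of_nat_diff)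
      also have "\<dots> = qpow q (int a) * (Fm (b-t) (a-t) * qbinom q X t)" unfolding P[symmetric] by (simp add: ac_simps)
      finally show ?thesis .
    qed
  qed
  finally show ?thesis unfolding M_def X_def by (simp add: sum_distrib_left)
qed

lemma commutation_sum_i_i1:
  "(if 0 < a then (\<Sum>t\<le>min (a-1) b. Fm (b-t) (a-1-t) * qbinom q (mw + int (a-1) - int b) t) else 0) =
   (\<Sum>t\<le>min a b. (if 0 < a-t then Fm (b-t) (a-t-1) else 0) * qbinom q (mw + int a - int b - 1) t)"
proof (cases "a = 0")
  case True then show ?thesis by simp
next
  case False
  have "(\<Sum>t\<le>min (a-1) b. Fm (b-t) (a-1-t) * qbinom q (mw + int (a-1) - int b) t)
     = (\<Sum>t\<le>min a b. if t \<le> min (a-1) b then Fm (b-t) (a-1-t) * qbinom q (mw + int (a-1) - int b) t else 0)"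
    by (rule sum_atMost_extend) auto
  also have "\<dots> = (\<Sum>t\<le>min a b. (if 0 < a-t then Fm (b-t) (a-t-1) else 0) * qbinom q (mw + int a - int b - 1) t)"
    using False by (intro sum.cong refl) (auto simp: of_nat_diff algebra_simps)
  finally show ?thesis using False by simp
qed

lemma commutation_sum_i1_i:
  "(if 0 < b then qpow q (int a + mw - int b + 1) * (\<Sum>t\<le>min a (b-1). Fm (b-1-t) (a-t) * qbinom q (mw + int a - int (b-1)) t) else 0) =
   (\<Sum>t\<le>min a b. (if 0 < b-t then qpow q (mw + int (a-t) - int (b-t) + 1) * Fm (b-t-1) (a-t) else 0) * qbinom q (mw + int a - int b + 1) t)"
proof (cases "b = 0")
  case True then show ?thesis by simp
next
  case False
  have "qpow q (int a + mw - int b + 1) * (\<Sum>t\<le>min a (b-1). Fm (b-1-t) (a-t) * qbinom q (mw + int a - int (b-1)) t)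
     = (\<Sum>t\<le>min a (b-1). qpow q (int a + mw - int b + 1) * (Fm (b-1-t) (a-t) * qbinom q (mw + int a - int (b-1)) t))"
    by (simp add: sum_distrib_left)
  also have "\<dots> = (\<Sum>t\<le>min a b. if t \<le> min a (b-1) then qpow q (int a + mw - int b + 1) * (Fm (b-1-t) (a-t) * qbinom q (mw + int a - int (b-1)) t) else 0)"
    by (rule sum_atMost_extend) auto
  also have "\<dots> = (\<Sum>t\<le>min a b. (if 0 < b-t then qpow q (mw + int (a-t) - int (b-t) + 1) * Fm (b-t-1) (a-t) else 0) * qbinom q (mw + int a - int b + 1) t)"
  proof (intro sum.cong refl)
    fix t assume "t \<in> {..min a b}"
    then have t: "t \<le> a" "t \<le> b" by auto
    have e: "int a + mw - int b + 1 = mw + int (a-t) - int (b-t) + 1" using t by (simp add: of_nat_diff)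
    have e2: "mw + int a - int (b-1) = mw + int a - int b + 1" using False by (simp add: of_nat_diff)
    show "(if t \<le> min a (b-1) then qpow q (int a + mw - int b + 1) * (Fm (b-1-t) (a-t) * qbinom q (mw + int a - int (b-1)) t) else 0) =
      (if 0 < b-t then qpow q (mw + int (a-t) - int (b-t) + 1) * Fm (b-t-1) (a-t) else 0) * qbinom q (mw + int a - int b + 1) t"
      using t False unfolding e e2 by (auto simp: algebra_simps)
  qed
  finally show ?thesis using False by simp
qed

lemma commutation_sum_i_i:
  "qpow q (- int a) * (\<Sum>t\<le>min a b. Fm (b-t) (a-t) * qbinom q (mw + int a - int b) t) +
    (if 0 < a \<and> 0 < b then qpow q (mw - int b + 1) * (\<Sum>t\<le>min (a-1) (b-1). Fm (b-1-t) (a-1-t) * qbinom q (mw + int (a-1) - int (b-1)) t) else 0) =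
   (\<Sum>t\<le>min a b. qpow q (- int (a-t)) * Fm (b-t) (a-t) * qbinom q (mw + int a - int b + 1) t)"
proof (cases "a = 0 \<or> b = 0")
  case True
  then have "min a b = 0" by auto
  then show ?thesis using True by auto
next
  case False
  define M where "M = min a b"
  define X where "X = mw + int a - int b"
  have M0: "0 < M" using False by (simp add: M_def)
  have mm: "min (a-1) (b-1) = M - 1" by (simp add: M_def)
  define D where "D t = Fm (b - Suc t) (a - Suc t) * qbinom q X t" for t
  have "(\<Sum>t\<le>min (a-1) (b-1). Fm (b-1-t) (a-1-t) * qbinom q (mw + int (a-1) - int (b-1)) t)
      = (\<Sum>t\<le>M. if t \<le> M - 1 then D t else 0)"
    unfolding mm using False by (subst sum_atMost_extend[of "M-1" M]) (auto simp: D_def X_def of_nat_diff add_diff_eq intro!: sum.cong)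
  also have "\<dots> = (\<Sum>t\<le>M. if t < M then D t else 0)" using M0 by (intro sum.cong refl) auto
  also have "\<dots> = (\<Sum>t\<le>M. if 0 < t then D (t - 1) else 0)" by (rule sum_atMost_shift_if)
  finally have S2: "(\<Sum>t\<le>min (a-1) (b-1). Fm (b-1-t) (a-1-t) * qbinom q (mw + int (a-1) - int (b-1)) t) = (\<Sum>t\<le>M. if 0 < t then D (t - 1) else 0)" .
  have "qpow q (- int a) * (\<Sum>t\<le>min a b. Fm (b-t) (a-t) * qbinom q (mw + int a - int b) t) +
    qpow q (mw - int b + 1) * (\<Sum>t\<le>M. if 0 < t then D (t - 1) else 0)
    = (\<Sum>t\<le>M. qpow q (- int a) * (Fm (b-t) (a-t) * qbinom q X t) + qpow q (mw - int b + 1) * (if 0 < t then D (t - 1) else 0))"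
    unfolding M_def X_def by (simp add: sum_distrib_left sum.distrib)
  also have "\<dots> = (\<Sum>t\<le>M. qpow q (- int (a-t)) * Fm (b-t) (a-t) * qbinom q (X + 1) t)"
  proof (rule sum.cong[OF refl])
    fix t assume "t \<in> {..M}"
    then have t: "t \<le> a" "t \<le> b" by (auto simp: M_def)
    show "qpow q (- int a) * (Fm (b-t) (a-t) * qbinom q X t) + qpow q (mw - int b + 1) * (if 0 < t then D (t - 1) else 0)
      = qpow q (- int (a-t)) * Fm (b-t) (a-t) * qbinom q (X + 1) t"
    proof (cases "t = 0")
      case True then show ?thesis by simp
    next
      case t0: False
      have Dt: "D (t - 1) = Fm (b-t) (a-t) * qbinom q X (t-1)" unfolding D_def using t0 by (simp add: Suc_diff_Suc)
      have P: "qpow q (- int (a-t)) * qbinom q (X+1) t = qpow q (- int a) * qbinom q X t + qpow q (mw - int b + 1) * qbinom q X (t-1)"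
        using qbinom_pascal_mult[of t "- int (a-t)" "X+1"] t0 t unfolding X_def by (simp add: of_nat_diff algebra_simps)
      have "qpow q (- int a) * (Fm (b-t) (a-t) * qbinom q X t) + qpow q (mw - int b + 1) * (if 0 < t then D (t - 1) else 0)
          = (qpow q (- int a) * qbinom q X t + qpow q (mw - int b + 1) * qbinom q X (t-1)) * Fm (b-t) (a-t)"
        unfolding Dt using t0 by (simp add: algebra_simps)
      also have "\<dots> = qpow q (- int (a-t)) * Fm (b-t) (a-t) * qbinom q (X + 1) t"
        unfolding P[symmetric] by (simp add: ac_simps)
      finally show ?thesis .
    qed
  qed
  finally show ?thesis unfolding S2 using False unfolding M_def X_def by simp
qed

lemma EF_commutation_snoc:
  assumes i: "1 \<le> i" "i < n"
    and words: "u \<in> words n m" "w \<in> words n m" "x \<in> {1..n}" "y \<in> {1..n}"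
    and IH: "\<And>a b. EF_mat q n m i a b u w
      = (\<Sum>t\<le>min a b. FE_mat q n m i (b - t) (a - t) u w * qbinom q (hK_weight i w + int a - int b) t)"
  shows "EF_mat q n (Suc m) i a b (u @ [x]) (w @ [y])
      = (\<Sum>t\<le>min a b. FE_mat q n (Suc m) i (b - t) (a - t) (u @ [x]) (w @ [y])
          * qbinom q (hK_weight i (w @ [y]) + int a - int b) t)"
proof -
  note EF_snoc = EF_mat_snoc[OF i words] and FE_snoc = FE_mat_snoc[OF i words]
  consider "x = i" "y = i" | "x = i + 1" "y = i" | "x = i" "y = i + 1" | "x = i + 1" "y = i + 1"
    | "y = i \<or> y = i + 1" "x \<noteq> i" "x \<noteq> i + 1" | "y \<noteq> i" "y \<noteq> i + 1"
    by blast
  then show ?thesis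
  proof cases
    case 1
    have top: "hK_weight i (w @ [y]) + int a - int b = hK_weight i w + int a - int b + 1"
      using 1 by (simp add: hK_def)
    have "EF_mat q n (Suc m) i a b (u @ [x]) (w @ [y])
      = qpow q (- int a) * (\<Sum>t\<le>min a b. FE_mat q n m i (b - t) (a - t) u w * qbinom q (hK_weight i w + int a - int b) t)
      + (if 0 < a \<and> 0 < b then qpow q (hK_weight i w - int b + 1) * (\<Sum>t\<le>min (a - 1) (b - 1). FE_mat q n m i (b - 1 - t) (a - 1 - t) u w * qbinom q (hK_weight i w + int (a - 1) - int (b - 1)) t) else 0)"
      unfolding EF_snoc using 1 by (simp add: IH)
    also have "\<dots> = (\<Sum>t\<le>min a b. qpow q (- int (a - t)) * FE_mat q n m i (b - t) (a - t) u w * qbinom q (hK_weight i w + int a - int b + 1) t)"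
      by (rule commutation_sum_i_i)
    finally show ?thesis unfolding top FE_snoc using 1 by simp
  next
    case 2
    have top: "hK_weight i (w @ [y]) + int a - int b = hK_weight i w + int a - int b + 1"
      using 2 by (simp add: hK_def)
    have "EF_mat q n (Suc m) i a b (u @ [x]) (w @ [y])
      = (if 0 < b then qpow q (int a + hK_weight i w - int b + 1) * (\<Sum>t\<le>min a (b - 1). FE_mat q n m i (b - 1 - t) (a - t) u w * qbinom q (hK_weight i w + int a - int (b - 1)) t) else 0)"
      unfolding EF_snoc using 2 by (simp add: IH)
    also have "\<dots> = (\<Sum>t\<le>min a b. (if 0 < b - t then qpow q (hK_weight i w + int (a - t) - int (b - t) + 1) * FE_mat q n m i (b - t - 1) (a - t) u w else 0) * qbinom q (hK_weight i w + int a - int b + 1) t)"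
      by (rule commutation_sum_i1_i)
    finally show ?thesis unfolding top FE_snoc using 2 by simp
  next
    case 3
    have top: "hK_weight i (w @ [y]) + int a - int b = hK_weight i w + int a - int b - 1"
      using 3 by (simp add: hK_def)
    have "EF_mat q n (Suc m) i a b (u @ [x]) (w @ [y])
      = (if 0 < a then (\<Sum>t\<le>min (a - 1) b. FE_mat q n m i (b - t) (a - 1 - t) u w * qbinom q (hK_weight i w + int (a - 1) - int b) t) else 0)"
      unfolding EF_snoc using 3 by (simp add: IH)
    also have "\<dots> = (\<Sum>t\<le>min a b. (if 0 < a - t then FE_mat q n m i (b - t) (a - t - 1) u w else 0) * qbinom q (hK_weight i w + int a - int b - 1) t)"
      by (rule commutation_sum_i_i1)
    finally show ?thesis unfolding top FE_snoc using 3 by simp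
  next
    case 4
    have top: "hK_weight i (w @ [y]) + int a - int b = hK_weight i w + int a - int b - 1"
      using 4 by (simp add: hK_def)
    have "EF_mat q n (Suc m) i a b (u @ [x]) (w @ [y])
      = qpow q (int a) * (\<Sum>t\<le>min a b. FE_mat q n m i (b - t) (a - t) u w * qbinom q (hK_weight i w + int a - int b) t)"
      unfolding EF_snoc using 4 by (simp add: IH)
    also have "\<dots> = (\<Sum>t\<le>min a b. (qpow q (int (a - t)) * FE_mat q n m i (b - t) (a - t) u w + (if 0 < a - t \<and> 0 < b - t then qpow q (hK_weight i w + 2 * int (a - t) - int (b - t) - 1) * FE_mat q n m i (b - t - 1) (a - t - 1) u w else 0)) * qbinom q (hK_weight i w + int a - int b - 1) t)"
      by (rule commutation_sum_i1_i1)
    finally show ?thesis unfolding top FE_snoc using 4 by simp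
  next
    case 5
    then show ?thesis unfolding EF_snoc FE_snoc by auto
  next
    case 6
    then show ?thesis unfolding EF_snoc FE_snoc by (simp add: IH hK_def)
  qed
qed

lemma EF_commutation:
  assumes "1 \<le> i" "i < n"
  shows "EF_mat q n m i a b U W
    = (\<Sum>t\<le>min a b. FE_mat q n m i (b - t) (a - t) U W * qbinom q (hK_weight i W + int a - int b) t)"
proof (induction m arbitrary: a b U W)
  case 0
  show ?case by (rule EF_commutation_Nil)
next
  case (Suc m)
  show ?case
  proof (cases "U \<in> words n (Suc m) \<and> W \<in> words n (Suc m)")
    case True
    then obtain u x w y where "U = u @ [x]" "W = w @ [y]"
      and words: "u \<in> words n m" "w \<in> words n m" "x \<in> {1..n}" "y \<in> {1..n}"
      by (rule nonzero_words_Suc_cases)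
    with EF_commutation_snoc[OF assms words Suc.IH] show ?thesis by simp
  qed (auto simp: EF_mat_outside FE_mat_outside)
qed

end

definition diag_mat :: "nat \<Rightarrow> nat \<Rightarrow> (nat list \<Rightarrow> 'a::comm_ring_1) \<Rightarrow> 'a mat" where
  "diag_mat n m f = (\<lambda>u w. if w \<in> words n m \<and> u = w then f w else 0)"

lemma subalg_zero: "(\<lambda>u w. 0) \<in> subalg n m G"
  using subalg.smult[OF subalg.one, where r = 0] by simp

lemma subalg_sum:
  "finite J \<Longrightarrow> (\<And>j. j \<in> J \<Longrightarrow> X j \<in> subalg n m G) \<Longrightarrow> (\<lambda>u w. \<Sum>j\<in>J. X j u w) \<in> subalg n m G"
  by (induction J rule: finite_induct) (simp_all add: subalg_zero subalg.add)

lemma subalg_mono: "G \<subseteq> subalg n m H \<Longrightarrow> subalg n m G \<subseteq> subalg n m H"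
proof
  fix A assume G: "G \<subseteq> subalg n m H" and "A \<in> subalg n m G"
  from \<open>A \<in> subalg n m G\<close> show "A \<in> subalg n m H"
    by (induction rule: subalg.induct) (use G in \<open>auto intro: subalg.intros\<close>)
qed

lemma diag_mat_one: "diag_mat n m (\<lambda>w. 1) = mat_one n m"
  by (auto simp: diag_mat_def mat_one_def fun_eq_iff)

lemma diag_mat_outside [simp]: "w \<notin> words n m \<Longrightarrow> diag_mat n m f u w = 0"
  by (simp add: diag_mat_def)

lemma diag_mat_cong: "(\<And>w. w \<in> words n m \<Longrightarrow> f w = g w) \<Longrightarrow> diag_mat n m f = diag_mat n m g"
  by (auto simp: diag_mat_def fun_eq_iff)

lemma mat_mult_diag_mat:
  "mat_mult n m B (diag_mat n m f) u w = (if w \<in> words n m then B u w * f w else 0)"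
  by (simp add: mat_mult_def diag_mat_def finite_words if_distrib[of "(*) _"] cong: if_cong)

lemma diag_mat_mult: "mat_mult n m (diag_mat n m f) (diag_mat n m g) = diag_mat n m (\<lambda>w. f w * g w)"
  by (auto simp: fun_eq_iff mat_mult_diag_mat) (auto simp: diag_mat_def)

lemma diag_mat_lin_mem:
  assumes "diag_mat n m f \<in> subalg n m G" "diag_mat n m g \<in> subalg n m G"
  shows "diag_mat n m (\<lambda>w. r * f w + s * g w) \<in> subalg n m G"
proof -
  have "diag_mat n m (\<lambda>w. r * f w + s * g w) = (\<lambda>u w. r * diag_mat n m f u w + s * diag_mat n m g u w)"
    by (auto simp: diag_mat_def fun_eq_iff)
  with assms show ?thesis by (simp add: subalg.add subalg.smult)
qed

lemma diag_mat_smult_mem: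
  assumes "diag_mat n m f \<in> subalg n m G"
  shows "diag_mat n m (\<lambda>w. r * f w) \<in> subalg n m G"
proof -
  have "diag_mat n m (\<lambda>w. r * f w) = (\<lambda>u w. r * diag_mat n m f u w)"
    by (auto simp: diag_mat_def fun_eq_iff)
  with assms show ?thesis by (simp add: subalg.smult)
qed

lemma diag_mat_mult_mem:
  "diag_mat n m f \<in> subalg n m G \<Longrightarrow> diag_mat n m g \<in> subalg n m G \<Longrightarrow> diag_mat n m (\<lambda>w. f w * g w) \<in> subalg n m G"
  using subalg.mult diag_mat_mult by metis

lemma diag_mat_prod_mem:
  "finite J \<Longrightarrow> (\<And>j. j \<in> J \<Longrightarrow> diag_mat n m (f j) \<in> subalg n m G)
    \<Longrightarrow> diag_mat n m (\<lambda>w. \<Prod>j\<in>J. f j w) \<in> subalg n m G"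
  by (induction J rule: finite_induct) (simp_all add: diag_mat_one subalg.one diag_mat_mult_mem)

lemma diag_mat_mem_if_factors:
  assumes indicator: "\<And>v. v \<in> words n m \<Longrightarrow> diag_mat n m (\<lambda>w. if key w = key v then 1 else 0) \<in> subalg n m G"
    and factors: "\<And>v w. v \<in> words n m \<Longrightarrow> w \<in> words n m \<Longrightarrow> key v = key w \<Longrightarrow> f v = f w"
  shows "diag_mat n m f \<in> subalg n m G"
proof -
  define rep where "rep \<tau> = inv_into (words n m) key \<tau>" for \<tau>
  have rep: "rep (key w) \<in> words n m" "key (rep (key w)) = key w" if "w \<in> words n m" for w
    using that by (simp_all add: rep_def inv_into_into f_inv_into_f)
  have "diag_mat n m f = (\<lambda>u w. \<Sum>\<tau>\<in>key ` words n m.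
      f (rep \<tau>) * diag_mat n m (\<lambda>w. if key w = key (rep \<tau>) then 1 else 0) u w)"
  proof (intro ext)
    fix u w
    show "diag_mat n m f u w = (\<Sum>\<tau>\<in>key ` words n m.
        f (rep \<tau>) * diag_mat n m (\<lambda>w. if key w = key (rep \<tau>) then 1 else 0) u w)"
    proof (cases "w \<in> words n m \<and> u = w")
      case True
      then have "(\<Sum>\<tau>\<in>key ` words n m. f (rep \<tau>) * diag_mat n m (\<lambda>w. if key w = key (rep \<tau>) then 1 else 0) u w)
          = (\<Sum>\<tau>\<in>key ` words n m. if \<tau> = key w then f (rep \<tau>) else 0)"
        by (intro sum.cong) (auto simp: diag_mat_def rep)
      also have "\<dots> = f w" using True rep factors by (simp add: finite_words)
      finally show ?thesis using True by (simp add: diag_mat_def)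
    qed (auto simp: diag_mat_def)
  qed
  also have "\<dots> \<in> subalg n m G"
    using rep by (intro subalg_sum subalg.smult) (auto simp: finite_words intro!: indicator)
  finally show ?thesis .
qed

lemma rho_E_0: "rho_E q n m i 0 = mat_one n m"
proof (intro ext)
  fix u w
  have "card (diff_pos m u w) = 0 \<longleftrightarrow> u = w" if "u \<in> words n m" "w \<in> words n m"
    using that by (auto simp: diff_pos_def words_def list_eq_iff_nth_eq)
  then show "rho_E q n m i 0 u w = mat_one n m u w"
    by (auto simp: rho_E_eq mat_one_def replaces_def E_exp_def diff_pos_def)
qed

lemma rho_F_0: "rho_F q n m i 0 = mat_one n m"
proof (intro ext)
  fix u w
  have "card (diff_pos m u w) = 0 \<longleftrightarrow> u = w" if "u \<in> words n m" "w \<in> words n m"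
    using that by (auto simp: diff_pos_def words_def list_eq_iff_nth_eq)
  then show "rho_F q n m i 0 u w = mat_one n m u w"
    by (auto simp: rho_F_eq mat_one_def replaces_def F_exp_def diff_pos_def)
qed

lemma rho_qh_eq_diag_mat: "rho_qh q n m h = diag_mat n m (\<lambda>w. prod_list (map (qpow q \<circ> h) w))"
proof -
  have "(\<Prod>k<m. qpow q (h (w ! k))) = prod_list (map (qpow q \<circ> h) w)" if "length w = m" for w
    using that by (simp add: prod.list_conv_set_nth atLeast0LessThan)
  then show ?thesis by (auto simp: rho_qh_def diag_mat_def fun_eq_iff words_def)
qed

lemma (in unit_param) prod_list_map_qpow: "prod_list (map (qpow q \<circ> f) w) = qpow q (sum_list (map f w))"
  by (induction w) (simp_all add: qpow_add)

lemma (in unit_param) rho_qh_hK: "rho_qh q n m (hK i) = diag_mat n m (\<lambda>w. qpow q (hK_weight i w))"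
  by (simp add: rho_qh_eq_diag_mat prod_list_map_qpow hK_weight_def)

text \<open>\<open>qbinom_diag q n m i t c\<close> is the operator \<open>[K_i; c, t]\<close> on \<open>V^{\<otimes>m}\<close>.\<close>
definition qbinom_diag :: "'a::comm_ring_1 \<Rightarrow> nat \<Rightarrow> nat \<Rightarrow> nat \<Rightarrow> nat \<Rightarrow> int \<Rightarrow> 'a mat" where
  "qbinom_diag q n m i t c = diag_mat n m (\<lambda>w. qbinom q (hK_weight i w + c) t)"

definition qbinom_separator :: "'a::comm_ring_1 \<Rightarrow> int \<Rightarrow> int \<Rightarrow> int \<Rightarrow> 'a" where
  "qbinom_separator q d d' x = (if d' < d then qbinom q (x - d') (nat (d - d'))
     else (-1) ^ nat (d' - d) * qbinom q (x - d - 1) (nat (d' - d)))"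

lemma qbinom_separator_same: "qbinom_separator q d d' d = 1"
proof (cases "d' < d")
  case True
  then show ?thesis using qbinom_of_nat[of q "nat (d - d')"] by (simp add: qbinom_separator_def)
next
  case False
  then show ?thesis by (simp add: qbinom_separator_def qbinom_minus_1 power_mult_distrib[symmetric])
qed

lemma qbinom_separator_other: "d \<noteq> d' \<Longrightarrow> qbinom_separator q d d' d' = 0"
  by (auto simp: qbinom_separator_def qbinom_eq_0)

lemma hK_weight_bounds:
  assumes "w \<in> words n m"
  shows "- int m \<le> hK_weight i w \<and> hK_weight i w \<le> int m"
proof -
  have "\<bar>hK_weight i w\<bar> \<le> int (length w)" by (induction w) (auto simp: hK_weight_def hK_def)
  with assms show ?thesis by (auto simp: words_def)
qed

context unit_param
begin

lemma qbinom_pascal_weight: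
  "qbinom q (x + c + 1) (Suc k)
   = qpow q (- int (Suc k)) * qbinom q (x + c) (Suc k) + qpow q (c - int k) * (qpow q x * qbinom q (x + c) k)"
  using qbinom_pascal[of "x + c + 1" k] by (simp add: qpow_mult algebra_simps)

lemma qbinom_pascal_weight_down:
  "qbinom q (x + c - 1) (Suc k)
   = qpow q (int (Suc k)) * qbinom q (x + c) (Suc k) + (- qpow q c) * (qpow q x * qbinom q (x + c - 1) k)"
proof -
  have "qpow q (int (Suc k)) * qbinom q (x + c) (Suc k)
    = qpow q (int (Suc k)) * (qpow q (- int (Suc k)) * qbinom q (x + c - 1) (Suc k))
      + qpow q (int (Suc k)) * (qpow q (c - 1 - int k) * (qpow q x * qbinom q (x + c - 1) k))"
    using qbinom_pascal_weight[of x "c - 1" k] by (simp add: distrib_left add_diff_eq)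
  also have "\<dots> = qbinom q (x + c - 1) (Suc k) + qpow q c * (qpow q x * qbinom q (x + c - 1) k)"
    by (simp only: qpow_mult) simp
  finally show ?thesis by simp
qed

context
  fixes n m i :: nat
  assumes i: "1 \<le> i" "i < n"
begin

lemma rho_E_mem: "rho_E q n m i l \<in> rho_U' q n m"
  using i unfolding rho_U'_def by (intro subalg.gen) (auto simp: gens_U'_def gens_EF_def)

lemma rho_F_mem: "rho_F q n m i l \<in> rho_U' q n m"
  using i unfolding rho_U'_def by (intro subalg.gen) (auto simp: gens_U'_def gens_EF_def)

lemma FE_mat_mem: "FE_mat q n m i b a \<in> rho_U' q n m"
  unfolding FE_mat_def using rho_E_mem rho_F_mem by (simp add: rho_U'_def subalg.mult)

lemma EF_mat_mem: "EF_mat q n m i a b \<in> rho_U' q n m"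
  unfolding EF_mat_def using rho_E_mem rho_F_mem by (simp add: rho_U'_def subalg.mult)

lemma diag_qpow_hK_weight_mem: "diag_mat n m (\<lambda>w. qpow q (hK_weight i w)) \<in> rho_U' q n m"
  using i unfolding rho_U'_def rho_qh_hK[symmetric] by (intro subalg.gen) (auto simp: gens_U'_def)

text \<open>The case \<open>a = b = t\<close> of the commutation formula expresses \<open>[K_i; 0, t]\<close> through \<open>E^(t) F^(t)\<close>
  and the \<open>F^(s) [K_i; 0, t - s] E^(s)\<close> with \<open>s > 0\<close>.\<close>
lemma qbinom_diag_0_mem: "qbinom_diag q n m i t 0 \<in> rho_U' q n m"
proof (induction t rule: less_induct)
  case (less t)
  define X where "X s = mat_mult n m (FE_mat q n m i (t - s) (t - s)) (qbinom_diag q n m i s 0)" for s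
  have X: "X s \<in> rho_U' q n m" if "s < t" for s
    unfolding X_def using less that FE_mat_mem by (simp add: rho_U'_def subalg.mult)
  have FE_0: "FE_mat q n m i 0 0 = mat_one n m"
    by (simp add: FE_mat_def rho_E_0 rho_F_0 diag_mat_mult flip: diag_mat_one)
  have "qbinom_diag q n m i t 0 = (\<lambda>u w. EF_mat q n m i t t u w + (\<Sum>s\<in>{..<t}. (-1) * X s u w))"
  proof (intro ext)
    fix u w
    show "qbinom_diag q n m i t 0 u w = EF_mat q n m i t t u w + (\<Sum>s\<in>{..<t}. (-1) * X s u w)"
    proof (cases "w \<in> words n m")
      case True
      have "EF_mat q n m i t t u w = (\<Sum>s\<le>t. FE_mat q n m i (t - s) (t - s) u w * qbinom q (hK_weight i w) s)"
        using EF_commutation[OF i, of m t t u w] by simp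
      also have "\<dots> = (\<Sum>s<t. X s u w) + mat_one n m u w * qbinom q (hK_weight i w) t"
        using True by (simp add: X_def qbinom_diag_def mat_mult_diag_mat FE_0 flip: lessThan_Suc_atMost)
      finally show ?thesis using True by (simp add: qbinom_diag_def diag_mat_def mat_one_def sum_negf)
    qed (simp add: X_def qbinom_diag_def mat_mult_diag_mat EF_mat_outside)
  qed
  also have "\<dots> \<in> rho_U' q n m"
    using EF_mat_mem X unfolding rho_U'_def by (intro subalg.add subalg_sum subalg.smult) auto
  finally show ?case .
qed

text \<open>Starting from \<open>c = 0\<close>, the \<open>q\<close>-Pascal rule moves \<open>c\<close> up and down, at the price of a factor \<open>K_i\<close>.\<close>
lemma qbinom_diag_mem: "qbinom_diag q n m i t c \<in> rho_U' q n m"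
proof (induction t arbitrary: c)
  case 0
  show ?case by (simp add: qbinom_diag_def diag_mat_one rho_U'_def subalg.one)
next
  case (Suc k)
  have K: "diag_mat n m (\<lambda>w. qpow q (hK_weight i w) * qbinom q (hK_weight i w + c) k) \<in> rho_U' q n m" for c
    using diag_mat_mult_mem diag_qpow_hK_weight_mem Suc.IH[of c] by (simp add: rho_U'_def qbinom_diag_def)
  show ?case
  proof (induction c rule: int_induct[where k = 0])
    case base
    show ?case by (rule qbinom_diag_0_mem)
  next
    case (step1 c)
    have "qbinom_diag q n m i (Suc k) (c + 1) = diag_mat n m (\<lambda>w. qpow q (- int (Suc k)) * qbinom q (hK_weight i w + c) (Suc k)
      + qpow q (c - int k) * (qpow q (hK_weight i w) * qbinom q (hK_weight i w + c) k))"
      unfolding qbinom_diag_def by (simp add: qbinom_pascal_weight flip: add.assoc)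
    with step1.IH K[of c] show ?case
      unfolding rho_U'_def qbinom_diag_def by (simp add: diag_mat_lin_mem)
  next
    case (step2 c)
    have "qbinom_diag q n m i (Suc k) (c - 1) = diag_mat n m (\<lambda>w. qpow q (int (Suc k)) * qbinom q (hK_weight i w + c) (Suc k)
      + (- qpow q c) * (qpow q (hK_weight i w) * qbinom q (hK_weight i w + (c - 1)) k))"
      unfolding qbinom_diag_def by (simp add: qbinom_pascal_weight_down add_diff_eq)
    with diag_mat_lin_mem[OF step2.IH[unfolded rho_U'_def qbinom_diag_def] K[of "c - 1", unfolded rho_U'_def],
        where r = "qpow q (int (Suc k))" and s = "- qpow q c"]
    show ?case unfolding rho_U'_def qbinom_diag_def by simp
  qed
qed

lemma weight_indicator_mem: "diag_mat n m (\<lambda>w. if hK_weight i w = d then 1 else 0) \<in> rho_U' q n m"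
proof -
  have separator: "diag_mat n m (\<lambda>w. qbinom_separator q d d' (hK_weight i w)) \<in> rho_U' q n m" for d'
  proof (cases "d' < d")
    case True
    then have "diag_mat n m (\<lambda>w. qbinom_separator q d d' (hK_weight i w)) = qbinom_diag q n m i (nat (d - d')) (- d')"
      by (simp add: qbinom_diag_def qbinom_separator_def)
    then show ?thesis using qbinom_diag_mem by simp
  next
    case False
    then have "diag_mat n m (\<lambda>w. qbinom_separator q d d' (hK_weight i w))
      = diag_mat n m (\<lambda>w. (-1) ^ nat (d' - d) * qbinom q (hK_weight i w + (- d - 1)) (nat (d' - d)))"
      by (simp add: qbinom_separator_def algebra_simps)
    then show ?thesis
      using diag_mat_smult_mem qbinom_diag_mem[of "nat (d' - d)" "- d - 1"] by (simp add: rho_U'_def qbinom_diag_def)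
  qed
  have "diag_mat n m (\<lambda>w. if hK_weight i w = d then 1 else 0)
    = diag_mat n m (\<lambda>w. \<Prod>d'\<in>{- int m..int m} - {d}. qbinom_separator q d d' (hK_weight i w))"
  proof (rule diag_mat_cong)
    fix w assume w: "w \<in> words n m"
    show "(if hK_weight i w = d then 1 else 0) = (\<Prod>d'\<in>{- int m..int m} - {d}. qbinom_separator q d d' (hK_weight i w))"
    proof (cases "hK_weight i w = d")
      case False
      with hK_weight_bounds[OF w, of i] have "hK_weight i w \<in> {- int m..int m} - {d}" by auto
      with False show ?thesis
        by (auto simp: qbinom_separator_other intro!: prod_zero bexI[of _ "hK_weight i w"])
    qed (simp add: qbinom_separator_same)
  qed
  also have "\<dots> \<in> rho_U' q n m"
    using separator unfolding rho_U'_def by (intro diag_mat_prod_mem) auto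
  finally show ?thesis .
qed

end

end

lemma hK_weight_count_list: "hK_weight i w = int (count_list w i) - int (count_list w (i + 1))"
  by (induction w) (auto simp: hK_weight_def hK_def)

lemma mset_eq_if_hK_weight_eq:
  assumes n: "1 \<le> n" and words: "v \<in> words n m" "w \<in> words n m"
    and same_weight: "\<And>i. 1 \<le> i \<Longrightarrow> i < n \<Longrightarrow> hK_weight i v = hK_weight i w"
  shows "mset v = mset w"
proof -
  define f where "f j = int (count_list v j) - int (count_list w j)" for j
  have const: "f j = f 1" if "1 \<le> j" "j \<le> n" for j
    using that
  proof (induction j rule: nat_induct_at_least)
    case (Suc j)
    then have "f (Suc j) = f j"
      using same_weight[of j] by (simp add: f_def hK_weight_count_list)
    with Suc show ?case by simp
  qed simp
  have "(\<Sum>j\<in>{1..n}. count_list v j) = m" "(\<Sum>j\<in>{1..n}. count_list w j) = m"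
    using words by (simp_all add: words_def sum_count_set)
  then have "(\<Sum>j\<in>{1..n}. f j) = 0"
    unfolding f_def sum_subtractf by (simp flip: of_nat_sum)
  moreover have "(\<Sum>j\<in>{1..n}. f j) = (\<Sum>j\<in>{1..n}. f 1)"
    by (intro sum.cong refl const) auto
  ultimately have "f 1 = 0" using n by simp
  have "count_list v j = count_list w j" for j
  proof (cases "j \<in> {1..n}")
    case True
    with const[of j] \<open>f 1 = 0\<close> show ?thesis by (simp add: f_def)
  next
    case False
    with words have "j \<notin> set v" "j \<notin> set w" by (auto simp: words_def)
    then show ?thesis by simp
  qed
  then show ?thesis by (simp add: multiset_eq_iff count_mset)
qed

lemma prod_indicator:
  "finite I \<Longrightarrow> (\<Prod>i\<in>I. if P i then (1::'a::comm_ring_1) else 0) = (if \<forall>i\<in>I. P i then 1 else 0)"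
  by (induction I rule: finite_induct) auto

lemma (in unit_param) rho_qh_mem:
  assumes "1 \<le> n"
  shows "rho_qh q n m h \<in> rho_U' q n m"
  unfolding rho_qh_eq_diag_mat rho_U'_def
proof (rule diag_mat_mem_if_factors[where key = "\<lambda>w. map (\<lambda>i. hK_weight i w) [1..<n]"])
  fix v
  have "diag_mat n m (\<lambda>w. \<Prod>i\<in>{1..<n}. if hK_weight i w = hK_weight i v then 1 else 0) \<in> subalg n m (gens_U' q n m)"
    using weight_indicator_mem unfolding rho_U'_def by (intro diag_mat_prod_mem) auto
  then show "diag_mat n m (\<lambda>w. if map (\<lambda>i. hK_weight i w) [1..<n] = map (\<lambda>i. hK_weight i v) [1..<n] then 1 else 0)
    \<in> subalg n m (gens_U' q n m)"
    by (simp add: prod_indicator map_eq_conv)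
next
  fix v w
  assume "v \<in> words n m" "w \<in> words n m" "map (\<lambda>i. hK_weight i v) [1..<n] = map (\<lambda>i. hK_weight i w) [1..<n]"
  then have "mset v = mset w"
    using assms by (intro mset_eq_if_hK_weight_eq) (auto simp: map_eq_conv)
  then show "prod_list (map (qpow q \<circ> h) v) = prod_list (map (qpow q \<circ> h) w)"
    using prod_mset_prod_list[of "map (qpow q \<circ> h) v"] prod_mset_prod_list[of "map (qpow q \<circ> h) w"]
    by simp
qed

theorem theorem2p1:
  fixes q :: "'a::comm_ring_1" and n m :: nat
  assumes "1 \<le> n" and "q dvd 1"
  shows "rho_U q n m = rho_U' q n m"
proof -
  interpret unit_param q by standard (rule assms(2))
  have "gens_U' q n m \<subseteq> gens_U q n m"
    by (auto simp: gens_U_def gens_U'_def)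
  then have "rho_U' q n m \<subseteq> rho_U q n m"
    unfolding rho_U_def rho_U'_def by (intro subalg_mono) (auto intro: subalg.gen)
  moreover have "gens_U q n m \<subseteq> rho_U' q n m"
    using rho_qh_mem[OF assms(1)] by (auto simp: gens_U_def rho_U'_def gens_U'_def intro: subalg.gen)
  then have "rho_U q n m \<subseteq> rho_U' q n m"
    unfolding rho_U_def by (simp add: subalg_mono rho_U'_def)
  ultimately show ?thesis by blast
qed

end
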